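(* Let $A$ be the Brauer graph algebra of a Brauer graph $G$, and let $C=c_n\cdots c_{l+1}c_l\cdots c_1$ be a string in $\overline{\mathrm{gr}(A)}$ with $l<n$, $s(c_1)=t(c_n)=i$, such that $c_l\cdots c_1$ or $c_1^{-1}\cdots c_l^{-1}$ lies in $\mathbb{P}$, where $i$ is the corresponding unbalanced edge with endpoints $v_S,v_L$. If $G_{i,S}\neq G_{i,L}$ and $G_{i,S}$ is a tree, then at least one of the following holds: (1) some vertex $v$ of $G_{i,S}$ has $m(v)\geq2$; (2) there are adjacent vertices $v,w$ of $G_{i,S}$ with $d_G(v,v_S)+1=d_G(w,v_S)$ and $\mathrm{grd}(v)<\mathrm{grd}(w)$. In other words, $G$ does not satisfy the $\star$-condition with respect to $i$.
   Context: $k$ algebraically closed. Brauer graph $G$: finite connected graph with multiplicity $m$ and cyclic orderings of edges at vertices. $A=kQ/I$: $Q_0=E(G)$; for each vertex $v$ with $m(v)\mathrm{val}(v)\ge2$ arrows along the cyclic ordering forming the special cycle $C_v$; $I$ generated by $C_v(\alpha)^{m(v)}-C_{v'}(\alpha')^{m(v')}$, $\alpha C_v(\alpha)^{m(v)}$, non-special compositions. $\mathrm{gr}(A)=\bigoplus\mathrm{rad}^nA/\mathrm{rad}^{n+1}A$. $\overline{\mathrm{gr}(A)}=\mathrm{gr}(A)/\bigoplus_{i\in L'}\mathrm{soc}(\mathrm{gr}(A)e_i)$, $L'$ the $i$ with $\mathrm{rad}(Ae_i)/\mathrm{soc}(Ae_i)=V_1\oplus V_2$, $V_1,V_2\ne0$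 of equal length; a string algebra. Strings: reduced words in arrows and inverse arrows avoiding relations. $\mathrm{grd}(v)=m(v)\mathrm{val}(v)$ if $>1$, else $m(v')\mathrm{val}(v')$ for the unique neighbour. An edge $i$ is unbalanced if its endpoints have different graded degrees, $v_S$ smaller, $v_L$ larger; $G_{i,S},G_{i,L}$ components of $G$ minus $i$ containing $v_S,v_L$. For unbalanced $i$, $r_i=C_{v_L}(\alpha)^{m(v_L)}$ where $C_{v_L}(\alpha)$ is the special $i$-cycle at $v_L$; $\mathbb{P}=\{r_i\}$. $d_G(u,v)$: number of edges of the walk from $u$ to $v$ in the tree. $\star$-condition w.r.t. $i$: $G_{i,S}\ne G_{i,L}$, $G_{i,S}$ a tree with all multiplicities $1$, and the walk from $v_S$ to any vertex of $G_{i,S}$ has weakly decreasing graded degrees. *)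

theory Defs
  imports Main
begin

text \<open>Each edge consists of exactly two
half-edges; the cyclic ordering of the edges around a vertex is a permutation
sig of the half-edges which preserves the vertex and acts transitively
(cyclically) on the half-edges at each vertex.  A loop contributes two
half-edges at its vertex.\<close>

record ('v,'e,'h) bgraph =
  V    :: "'v set"
  E    :: "'e set"
  H    :: "'h set"
  vtx  :: "'h \<Rightarrow> 'v"
  edg  :: "'h \<Rightarrow> 'e"
  sig  :: "'h \<Rightarrow> 'h"
  mult :: "'v \<Rightarrow> nat"

definition ends :: "('v,'e,'h) bgraph \<Rightarrow> 'e \<Rightarrow> 'v set" where
  "ends G e = {vtx G h | h. h \<in> H G \<and> edg G h = e}"

definition is_walk :: "('v,'e,'h) bgraph \<Rightarrow> 'e set \<Rightarrow> 'v list \<Rightarrow> 'e list \<Rightarrow> bool" where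
  "is_walk G E' vs es \<longleftrightarrow> length vs = length es + 1 \<and>
     (\<forall>k<length es. es!k \<in> E' \<and> ends G (es!k) = {vs!k, vs!(Suc k)})"

definition reach :: "('v,'e,'h) bgraph \<Rightarrow> 'e set \<Rightarrow> 'v \<Rightarrow> 'v \<Rightarrow> bool" where
  "reach G E' u w \<longleftrightarrow> (\<exists>vs es. is_walk G E' vs es \<and> hd vs = u \<and> last vs = w)"

definition connected_sub :: "('v,'e,'h) bgraph \<Rightarrow> 'v set \<Rightarrow> 'e set \<Rightarrow> bool" where
  "connected_sub G V' E' \<longleftrightarrow> (\<forall>u\<in>V'. \<forall>w\<in>V'. reach G E' u w)"

definition has_cycle :: "('v,'e,'h) bgraph \<Rightarrow> 'e set \<Rightarrow> bool" where
  "has_cycle G E' \<longleftrightarrow> (\<exists>vs es. is_walk G E' vs es \<and> es \<noteq> [] \<and> hd vs = last vs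
       \<and> distinct es \<and> distinct (tl vs))"

definition is_tree :: "('v,'e,'h) bgraph \<Rightarrow> 'v set \<Rightarrow> 'e set \<Rightarrow> bool" where
  "is_tree G V' E' \<longleftrightarrow> connected_sub G V' E' \<and> \<not> has_cycle G E'"

definition brauer_graph :: "('v,'e,'h) bgraph \<Rightarrow> bool" where
  "brauer_graph G \<longleftrightarrow>
     finite (V G) \<and> finite (E G) \<and> finite (H G) \<and> E G \<noteq> {} \<and>
     vtx G ` H G = V G \<and> edg G ` H G = E G \<and>
     (\<forall>e\<in>E G. card {h\<in>H G. edg G h = e} = 2) \<and>
     bij_betw (sig G) (H G) (H G) \<and>
     (\<forall>h\<in>H G. vtx G (sig G h) = vtx G h) \<and>
     (\<forall>h\<in>H G. \<forall>h'\<in>H G. vtx G h = vtx G h' \<longrightarrow> (\<exists>k. (sig G ^^ k) h = h')) \<and>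
     (\<forall>v\<in>V G. mult G v \<ge> 1) \<and>
     connected_sub G (V G) (E G)"

definition val :: "('v,'e,'h) bgraph \<Rightarrow> 'v \<Rightarrow> nat" where
  "val G v = card {h\<in>H G. vtx G h = v}"

definition Nv :: "('v,'e,'h) bgraph \<Rightarrow> 'v \<Rightarrow> nat" where
  "Nv G v = mult G v * val G v"

definition ohe :: "('v,'e,'h) bgraph \<Rightarrow> 'h \<Rightarrow> 'h" where
  "ohe G h = (THE h'. h' \<in> H G \<and> h' \<noteq> h \<and> edg G h' = edg G h)"

definition grd :: "('v,'e,'h) bgraph \<Rightarrow> 'v \<Rightarrow> nat" where
  "grd G v = (if Nv G v > 1 then Nv G v
              else Nv G (vtx G (ohe G (THE h. h \<in> H G \<and> vtx G h = v))))"

definition unbalanced :: "('v,'e,'h) bgraph \<Rightarrow> 'e \<Rightarrow> bool" where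
  "unbalanced G i \<longleftrightarrow> i \<in> E G \<and> (\<exists>a b. ends G i = {a, b} \<and> grd G a \<noteq> grd G b)"

definition vL_of :: "('v,'e,'h) bgraph \<Rightarrow> 'e \<Rightarrow> 'v" where
  "vL_of G i = (THE v. v \<in> ends G i \<and> (\<forall>u\<in>ends G i. grd G u \<le> grd G v))"

text \<open>Paths of the quiver are lists of arrows, first arrow first.  Arrows are the
half-edges h at non-truncated vertices (m val \<ge> 2); h is the arrow from
edge (edg h) to the next edge (edg (sig h)) in the cyclic ordering.
r_i = C_{v_L}(alpha)^{m(v_L)}: the special i-cycle at v_L, to the power m(v_L).\<close>
definition r_path :: "('v,'e,'h) bgraph \<Rightarrow> 'e \<Rightarrow> 'h list" where
  "r_path G i = (let v = vL_of G i; h = (THE h. h \<in> H G \<and> edg G h = i \<and> vtx G h = v)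
                 in map (\<lambda>k. (sig G ^^ k) h) [0..<Nv G v])"

definition Pset :: "('v,'e,'h) bgraph \<Rightarrow> 'h list set" where
  "Pset G = {r_path G i | i. unbalanced G i}"

definition is_arrow :: "('v,'e,'h) bgraph \<Rightarrow> 'h \<Rightarrow> bool" where
  "is_arrow G h \<longleftrightarrow> h \<in> H G \<and> Nv G (vtx G h) \<ge> 2"

text \<open>Nonzero paths of the monomial (string) algebra gr(A)-bar: special paths
h, sig h, sig^2 h, ... at a non-truncated vertex v, of length < m(v)val(v), or of
length m(v)val(v) (the socle path C_v^m at edge (edg h)) provided it survives
in gr(A)-bar, i.e. the other endpoint v' of that edge has m(v')val(v') <
m(v)val(v) (for equality the socle of gr(A)e lies in L' and is factored out,
and if it is larger the path lies in a deeper radical layer, hence is 0 in gr(A)).\<close>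
definition nonzero_path :: "('v,'e,'h) bgraph \<Rightarrow> 'h list \<Rightarrow> bool" where
  "nonzero_path G p \<longleftrightarrow> p \<noteq> [] \<and> (\<forall>h\<in>set p. is_arrow G h) \<and>
     (\<forall>k. Suc k < length p \<longrightarrow> p!(Suc k) = sig G (p!k)) \<and>
     (length p < Nv G (vtx G (hd p)) \<or>
      (length p = Nv G (vtx G (hd p)) \<and> Nv G (vtx G (ohe G (hd p))) < Nv G (vtx G (hd p))))"

datatype 'h letter = Dir 'h | Inv 'h

fun arr :: "'h letter \<Rightarrow> 'h" where
  "arr (Dir h) = h" | "arr (Inv h) = h"

fun is_dir :: "'h letter \<Rightarrow> bool" where
  "is_dir (Dir h) = True" | "is_dir (Inv h) = False"

fun lsrc :: "('v,'e,'h) bgraph \<Rightarrow> 'h letter \<Rightarrow> 'e" where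
  "lsrc G (Dir h) = edg G h" | "lsrc G (Inv h) = edg G (sig G h)"

fun ltgt :: "('v,'e,'h) bgraph \<Rightarrow> 'h letter \<Rightarrow> 'e" where
  "ltgt G (Dir h) = edg G (sig G h)" | "ltgt G (Inv h) = edg G h"

fun linv :: "'h letter \<Rightarrow> 'h letter" where
  "linv (Dir h) = Inv h" | "linv (Inv h) = Dir h"

text \<open>A (non-trivial) string C = c_n ... c_1 is represented by the list
[c_1, ..., c_n]: consecutive letters compose, the word is reduced, and no
subword of direct letters is a zero path and no subword of inverse letters
is the inverse of a zero path.\<close>
definition is_string :: "('v,'e,'h) bgraph \<Rightarrow> 'h letter list \<Rightarrow> bool" where
  "is_string G cs \<longleftrightarrow> cs \<noteq> [] \<and> (\<forall>c\<in>set cs. is_arrow G (arr c)) \<and>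
     (\<forall>k. Suc k < length cs \<longrightarrow> ltgt G (cs!k) = lsrc G (cs!Suc k)
          \<and> cs!Suc k \<noteq> linv (cs!k)) \<and>
     (\<forall>a b. a < b \<and> b \<le> length cs \<longrightarrow>
        ((\<forall>c\<in>set (take (b-a) (drop a cs)). is_dir c) \<longrightarrow>
            nonzero_path G (map arr (take (b-a) (drop a cs)))) \<and>
        ((\<forall>c\<in>set (take (b-a) (drop a cs)). \<not> is_dir c) \<longrightarrow>
            nonzero_path G (rev (map arr (take (b-a) (drop a cs))))))"

definition compV :: "('v,'e,'h) bgraph \<Rightarrow> 'e \<Rightarrow> 'v \<Rightarrow> 'v set" where
  "compV G i v = {u \<in> V G. reach G (E G - {i}) v u}"

definition compE :: "('v,'e,'h) bgraph \<Rightarrow> 'e \<Rightarrow> 'v \<Rightarrow> 'e set" where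
  "compE G i v = {e \<in> E G - {i}. ends G e \<subseteq> compV G i v}"

definition dist :: "('v,'e,'h) bgraph \<Rightarrow> 'v \<Rightarrow> 'v \<Rightarrow> nat" where
  "dist G u w = (LEAST n. \<exists>vs es. is_walk G (E G) vs es \<and> hd vs = u \<and> last vs = w
                          \<and> length es = n)"

end

theory Submission
  imports Defs
begin

text \<open>Assume the star condition.  The prefix \<open>r\<^sub>i\<close> (or its inverse) winds once around
  \<open>vL\<close> from \<open>i\<close> back to \<open>i\<close>; a longer run would be zero, so the next letter turns and the
  string continues at \<open>vS\<close>.  From then on the string is a sequence of runs of equally
  oriented letters, each winding around one vertex \<open>x\<close> of the tree \<open>G\<^sub>i\<^sub>,\<^sub>S\<close> which it entered
  from the side of \<open>vS\<close>.  Since \<open>m(x) = 1\<close>, winding all the way around \<open>x\<close> gives a path of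
  length \<open>m(x) val(x)\<close>, which survives in \<open>gr(A)\<close>-bar only if the neighbour it came from has
  smaller \<open>m val\<close>, i.e. smaller graded degree; the star condition (and
  \<open>grd(vS) < grd(vL)\<close> at \<open>vS\<close>) forbids this.  So every run leaves \<open>x\<close> through another edge,
  which in a tree leads one step further away from \<open>vS\<close>.  Hence the string never returns
  to \<open>i\<close>, contradicting \<open>t(c\<^sub>n) = i\<close>.\<close>

lemma is_walk_nonempty: "is_walk G E' vs es \<Longrightarrow> vs \<noteq> []"
  unfolding is_walk_def by auto

lemma is_walk_Nil: "is_walk G E' vs [] \<longleftrightarrow> (\<exists>v. vs = [v])"
  unfolding is_walk_def by (auto simp: length_Suc_conv)

lemma is_walk_Cons:
  "is_walk G E' (v # vs) (e # es) \<longleftrightarrow>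
     vs \<noteq> [] \<and> e \<in> E' \<and> ends G e = {v, hd vs} \<and> is_walk G E' vs es"
  unfolding is_walk_def by (cases vs) (auto simp: less_Suc_eq_0_disj hd_conv_nth)

lemma is_walk_append:
  assumes "is_walk G E' vs1 es1" "is_walk G E' vs2 es2" "last vs1 = hd vs2"
  shows "is_walk G E' (vs1 @ tl vs2) (es1 @ es2)"
    and "hd (vs1 @ tl vs2) = hd vs1" and "last (vs1 @ tl vs2) = last vs2"
proof -
  show "is_walk G E' (vs1 @ tl vs2) (es1 @ es2)"
    using assms
  proof (induction es1 arbitrary: vs1)
    case Nil
    then show ?case
      using is_walk_nonempty[OF Nil(2)] by (auto simp: is_walk_Nil)
  next
    case (Cons e es1)
    then obtain v vs1' where "vs1 = v # vs1'"
      using is_walk_nonempty by (metis list.exhaust)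
    with Cons show ?case
      by (auto simp: is_walk_Cons)
  qed
  show "hd (vs1 @ tl vs2) = hd vs1"
    using is_walk_nonempty[OF assms(1)] by simp
  show "last (vs1 @ tl vs2) = last vs2"
    using is_walk_nonempty[OF assms(1)] is_walk_nonempty[OF assms(2)] assms(3)
    by (cases vs2) auto
qed

lemma is_walk_rev: "is_walk G E' vs es \<Longrightarrow> is_walk G E' (rev vs) (rev es)"
proof (induction es arbitrary: vs)
  case Nil
  then show ?case by (auto simp: is_walk_Nil)
next
  case (Cons e es)
  then obtain v vs' where vs: "vs = v # vs'" and "vs' \<noteq> []" "e \<in> E'"
    and "ends G e = {v, hd vs'}" and "is_walk G E' vs' es"
    using is_walk_nonempty by (metis is_walk_Cons list.exhaust)
  then have "is_walk G E' (rev vs') (rev es)" "is_walk G E' [hd vs', v] [e]"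
    using Cons.IH by (auto simp: is_walk_Cons is_walk_Nil insert_commute)
  moreover have "last (rev vs') = hd [hd vs', v]"
    using \<open>vs' \<noteq> []\<close> by (simp add: last_rev)
  ultimately have "is_walk G E' (rev vs' @ tl [hd vs', v]) (rev es @ [e])"
    by (rule is_walk_append(1))
  then show ?case
    using vs by simp
qed

lemma walk_edge_ends:
  assumes "is_walk G E' vs es" "e \<in> set es"
  obtains k where "Suc k < length vs" "ends G e = {vs ! k, vs ! Suc k}"
proof -
  obtain k where "k < length es" "e = es ! k"
    using assms(2) by (auto simp: in_set_conv_nth)
  then show ?thesis
    using that assms(1) unfolding is_walk_def by simp
qed

lemma walk_edge_ends_subset: "is_walk G E' vs es \<Longrightarrow> e \<in> set es \<Longrightarrow> ends G e \<subseteq> set vs"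
  by (metis walk_edge_ends Suc_lessD insert_subset nth_mem empty_subsetI)

lemma distinct_walk_edge_not_joining_ends:
  assumes walk: "is_walk G E' vs es" and dist: "distinct vs" and "2 \<le> length es" "e \<in> set es"
  shows "ends G e \<noteq> {hd vs, last vs}"
proof
  assume e: "ends G e = {hd vs, last vs}"
  obtain k where k: "Suc k < length vs" "ends G e = {vs ! k, vs ! Suc k}"
    using walk_edge_ends[OF walk assms(4)] .
  define m where "m = length vs - 1"
  have m: "m = length es" "m < length vs"
    using walk unfolding is_walk_def m_def by simp_all
  moreover have "vs \<noteq> []"
    using m(2) by auto
  ultimately have "hd vs = vs ! 0" "last vs = vs ! m"
    unfolding m_def by (simp_all add: hd_conv_nth last_conv_nth)
  then have ends: "{vs ! k, vs ! Suc k} = {vs ! 0, vs ! m}"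
    using e k(2) by simp
  have idx: "k < length vs" "0 < length vs"
    using k(1) by linarith+
  have "vs ! Suc k \<in> {vs ! 0, vs ! m}" "vs ! k \<in> {vs ! 0, vs ! m}"
    unfolding ends[symmetric] by simp_all
  then have "Suc k = 0 \<or> Suc k = m" "k = 0 \<or> k = m"
    using nth_eq_iff_index_eq[OF dist] k(1) m(2) idx by auto
  then have "Suc k = m" "k = 0"
    by auto
  then show False
    using m(1) \<open>2 \<le> length es\<close> by simp
qed

lemma reach_refl: "reach G E' u u"
  unfolding reach_def by (rule exI[of _ "[u]"], rule exI[of _ "[]"]) (simp add: is_walk_Nil)

lemma reach_trans: "reach G E' u v \<Longrightarrow> reach G E' v w \<Longrightarrow> reach G E' u w"
  unfolding reach_def by (metis is_walk_append)

lemma reach_sym: "reach G E' u v \<Longrightarrow> reach G E' v u"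
  unfolding reach_def by (metis is_walk_rev is_walk_nonempty hd_rev last_rev)

lemma reach_edge: "e \<in> E' \<Longrightarrow> ends G e = {v, w} \<Longrightarrow> reach G E' v w"
  unfolding reach_def
  by (auto intro!: exI[of _ "[v, w]"] exI[of _ "[e]"] simp: is_walk_Cons is_walk_Nil)

lemma grd_eq_Nv: "2 \<le> Nv G v \<Longrightarrow> grd G v = Nv G v"
  unfolding grd_def by simp

lemma vL_of_eq: "ends G j = {a, b} \<Longrightarrow> grd G a < grd G b \<Longrightarrow> vL_of G j = b"
  unfolding vL_of_def by (rule the_equality) auto

lemma unbalanced_vL_of:
  assumes "unbalanced G j"
  obtains a where "ends G j = {a, vL_of G j}" "a \<noteq> vL_of G j"
proof -
  obtain a b where ab: "ends G j = {a, b}" "grd G a \<noteq> grd G b"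
    using assms unfolding unbalanced_def by blast
  then have "a \<noteq> b" "ends G j = {b, a}"
    by (auto simp: insert_commute)
  consider "grd G a < grd G b" | "grd G b < grd G a"
    using ab(2) by linarith
  then show ?thesis
  proof cases
    case 1
    then show ?thesis
      using that[of a] ab(1) \<open>a \<noteq> b\<close> vL_of_eq[OF ab(1) 1] by simp
  next
    case 2
    then show ?thesis
      using that[of b] \<open>ends G j = {b, a}\<close> \<open>a \<noteq> b\<close> vL_of_eq[OF \<open>ends G j = {b, a}\<close> 2] by simp
  qed
qed

locale brauer =
  fixes G :: "('v,'e,'h) bgraph"
  assumes brauer_graph: "brauer_graph G"
begin

lemma finite_H: "finite (H G)"
  using brauer_graph unfolding brauer_graph_def by blast

lemma sig_in_H: "h \<in> H G \<Longrightarrow> sig G h \<in> H G"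
  using brauer_graph unfolding brauer_graph_def bij_betw_def by blast

lemma vtx_sig: "h \<in> H G \<Longrightarrow> vtx G (sig G h) = vtx G h"
  using brauer_graph unfolding brauer_graph_def by blast

lemma sig_inj: "x \<in> H G \<Longrightarrow> y \<in> H G \<Longrightarrow> sig G x = sig G y \<Longrightarrow> x = y"
  using brauer_graph unfolding brauer_graph_def bij_betw_def inj_on_def by blast

lemma edg_in_E: "h \<in> H G \<Longrightarrow> edg G h \<in> E G"
  using brauer_graph unfolding brauer_graph_def by blast

lemma sig_transitive:
  "h \<in> H G \<Longrightarrow> h' \<in> H G \<Longrightarrow> vtx G h = vtx G h' \<Longrightarrow> \<exists>k. (sig G ^^ k) h = h'"
  using brauer_graph unfolding brauer_graph_def by blast

lemma mult_ge_1: "v \<in> V G \<Longrightarrow> 1 \<le> mult G v"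
  using brauer_graph unfolding brauer_graph_def by blast

lemma reach_connected: "u \<in> V G \<Longrightarrow> w \<in> V G \<Longrightarrow> reach G (E G) u w"
  using brauer_graph unfolding brauer_graph_def connected_sub_def by blast

lemma vtx_in_V: "h \<in> H G \<Longrightarrow> vtx G h \<in> V G"
  using brauer_graph unfolding brauer_graph_def by blast

lemma ends_subset_V: "ends G e \<subseteq> V G"
  using brauer_graph unfolding ends_def brauer_graph_def by blast

lemma half_edges_of_edg:
  assumes h: "h \<in> H G"
  obtains h' where "{x \<in> H G. edg G x = edg G h} = {h, h'}" "h' \<noteq> h"
proof -
  have "card {x \<in> H G. edg G x = edg G h} = 2"
    using brauer_graph edg_in_E[OF h] unfolding brauer_graph_def by blast
  then obtain a b where ab: "{x \<in> H G. edg G x = edg G h} = {a, b}" "a \<noteq> b"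
    unfolding card_2_iff by blast
  then have "h = a \<or> h = b"
    using h by blast
  then show ?thesis
    using that ab by (auto simp: insert_commute)
qed

lemma ohe:
  assumes "h \<in> H G"
  shows "ohe G h \<in> H G" and "ohe G h \<noteq> h" and "edg G (ohe G h) = edg G h"
proof -
  obtain h' where h': "{x \<in> H G. edg G x = edg G h} = {h, h'}" "h' \<noteq> h"
    using half_edges_of_edg[OF assms] .
  have "\<exists>!x. x \<in> H G \<and> x \<noteq> h \<and> edg G x = edg G h"
  proof
    show "h' \<in> H G \<and> h' \<noteq> h \<and> edg G h' = edg G h"
      using h' by blast
  next
    fix x assume "x \<in> H G \<and> x \<noteq> h \<and> edg G x = edg G h"
    then show "x = h'"
      using h'(1) by blast
  qed
  then have "ohe G h \<in> H G \<and> ohe G h \<noteq> h \<and> edg G (ohe G h) = edg G h"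
    unfolding ohe_def by (rule theI')
  then show "ohe G h \<in> H G" "ohe G h \<noteq> h" "edg G (ohe G h) = edg G h"
    by blast+
qed

lemma same_edg_cases:
  assumes "h \<in> H G" "h' \<in> H G" "edg G h' = edg G h"
  shows "h' = h \<or> h' = ohe G h"
proof -
  obtain x where x: "{y \<in> H G. edg G y = edg G h} = {h, x}" "x \<noteq> h"
    using half_edges_of_edg[OF assms(1)] .
  have "ohe G h \<in> {h, x}"
    using ohe[OF assms(1)] x(1) by blast
  then have "ohe G h = x"
    using ohe(2)[OF assms(1)] by blast
  moreover have "h' \<in> {h, x}"
    using assms x(1) by blast
  ultimately show ?thesis by blast
qed

lemma ohe_ohe:
  assumes "h \<in> H G"
  shows "ohe G (ohe G h) = h"
proof -
  have "ohe G (ohe G h) = h \<or> ohe G (ohe G h) = ohe G h"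
    using same_edg_cases[OF assms ohe(1)[OF ohe(1)[OF assms]]] ohe[OF assms] ohe[OF ohe(1)[OF assms]]
    by simp
  then show ?thesis
    using ohe(2)[OF ohe(1)[OF assms]] by blast
qed

lemma ends_edg:
  assumes "h \<in> H G"
  shows "ends G (edg G h) = {vtx G h, vtx G (ohe G h)}"
proof (intro set_eqI iffI)
  fix x assume "x \<in> ends G (edg G h)"
  then obtain h' where "x = vtx G h'" "h' \<in> H G" "edg G h' = edg G h"
    unfolding ends_def by blast
  then show "x \<in> {vtx G h, vtx G (ohe G h)}"
    using same_edg_cases[OF assms] by blast
next
  fix x assume "x \<in> {vtx G h, vtx G (ohe G h)}"
  then show "x \<in> ends G (edg G h)"
    unfolding ends_def using assms ohe[OF assms] by blast
qed

lemma half_edge_at_end: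
  assumes "ends G j = {a, b}" "a \<noteq> b"
  obtains h where "h \<in> H G" "edg G h = j" "vtx G h = b" "vtx G (ohe G h) = a"
    and "(THE h. h \<in> H G \<and> edg G h = j \<and> vtx G h = b) = h"
proof -
  have "b \<in> ends G j"
    using assms(1) by simp
  then obtain h where h: "h \<in> H G" "edg G h = j" "vtx G h = b"
    unfolding ends_def by blast
  have "ends G j = {b, vtx G (ohe G h)}"
    using ends_edg[OF h(1)] h by simp
  then have a: "vtx G (ohe G h) = a"
    using assms by (metis doubleton_eq_iff)
  have "h' = h" if h': "h' \<in> H G" "edg G h' = j" "vtx G h' = b" for h'
    using same_edg_cases[OF h(1) h'(1)] h h' a assms(2) by auto
  then have "(THE h. h \<in> H G \<and> edg G h = j \<and> vtx G h = b) = h"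
    using h by blast
  with h a that show ?thesis
    by blast
qed

lemma r_path_unbalanced:
  assumes "unbalanced G j"
  obtains h where "h \<in> H G" "edg G h = j" "vtx G h = vL_of G j"
    and "r_path G j = map (\<lambda>k. (sig G ^^ k) h) [0..<Nv G (vL_of G j)]"
proof -
  obtain a where "ends G j = {a, vL_of G j}" "a \<noteq> vL_of G j"
    using unbalanced_vL_of[OF assms] .
  then obtain h where "h \<in> H G" "edg G h = j" "vtx G h = vL_of G j"
    and "(THE h. h \<in> H G \<and> edg G h = j \<and> vtx G h = vL_of G j) = h"
    using half_edge_at_end by blast
  then show ?thesis
    using that unfolding r_path_def Let_def by simp
qed

section \<open>Orbits of the cyclic ordering\<close>

lemma funpow_sig_in_H: "h \<in> H G \<Longrightarrow> (sig G ^^ k) h \<in> H G"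
  by (induction k) (auto simp: sig_in_H)

lemma vtx_funpow_sig: "h \<in> H G \<Longrightarrow> vtx G ((sig G ^^ k) h) = vtx G h"
  by (induction k) (auto simp: vtx_sig funpow_sig_in_H)

lemma funpow_sig_inj:
  assumes "x \<in> H G" "y \<in> H G"
  shows "(sig G ^^ k) x = (sig G ^^ k) y \<Longrightarrow> x = y"
proof (induction k)
  case (Suc k)
  then show ?case
    using sig_inj[OF funpow_sig_in_H[OF assms(1)] funpow_sig_in_H[OF assms(2)]] by simp
qed simp

lemma funpow_sig_mod:
  assumes "(sig G ^^ m) h = h"
  shows "(sig G ^^ k) h = (sig G ^^ (k mod m)) h"
proof -
  have "(sig G ^^ (m * q)) h = h" for q
    by (induction q) (auto simp: funpow_add assms)
  moreover have "k = k mod m + m * (k div m)"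
    by simp
  ultimately show ?thesis
    by (metis funpow_add o_apply)
qed

lemma val_le_period:
  assumes h: "h \<in> H G" and "1 \<le> m" and period: "(sig G ^^ m) h = h"
  shows "val G (vtx G h) \<le> m"
proof -
  have "{h' \<in> H G. vtx G h' = vtx G h} \<subseteq> (\<lambda>k. (sig G ^^ k) h) ` {..<m}"
  proof
    fix h' assume "h' \<in> {h' \<in> H G. vtx G h' = vtx G h}"
    then obtain k where "(sig G ^^ k) h = h'"
      using sig_transitive[OF h] by fastforce
    then have "(sig G ^^ (k mod m)) h = h'"
      using funpow_sig_mod[OF period] by simp
    then show "h' \<in> (\<lambda>k. (sig G ^^ k) h) ` {..<m}"
      using \<open>1 \<le> m\<close> by force
  qed
  then have "val G (vtx G h) \<le> card ((\<lambda>k. (sig G ^^ k) h) ` {..<m})"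
    unfolding val_def by (intro card_mono) auto
  also have "\<dots> \<le> m"
    using card_image_le[of "{..<m}"] by simp
  finally show ?thesis .
qed

lemma val_pos: "h \<in> H G \<Longrightarrow> 1 \<le> val G (vtx G h)"
  unfolding val_def using finite_H by (auto simp: Suc_le_eq card_gt_0_iff)

lemma funpow_sig_val:
  assumes h: "h \<in> H G"
  shows "(sig G ^^ val G (vtx G h)) h = h"
proof -
  let ?v = "val G (vtx G h)" and ?f = "\<lambda>k. (sig G ^^ k) h"
  have sub: "?f ` {..?v} \<subseteq> {h' \<in> H G. vtx G h' = vtx G h}"
    using funpow_sig_in_H[OF h] vtx_funpow_sig[OF h] by blast
  have "\<not> inj_on ?f {..?v}"
  proof
    assume "inj_on ?f {..?v}"
    then have "card {..?v} \<le> card {h' \<in> H G. vtx G h' = vtx G h}"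
      by (rule card_inj_on_le[OF _ sub]) (simp add: finite_H)
    then show False
      unfolding val_def by simp
  qed
  then obtain a b where "a \<le> ?v" "b \<le> ?v" "a \<noteq> b" "?f a = ?f b"
    unfolding inj_on_def by blast
  then obtain a b where ab: "a < b" "b \<le> ?v" "?f a = ?f b"
    by (metis linorder_neqE_nat)
  have "?f b = (sig G ^^ a) ((sig G ^^ (b - a)) h)"
    using ab(1) funpow_add[of a "b - a" "sig G"] by simp
  then have period: "(sig G ^^ (b - a)) h = h"
    using funpow_sig_inj[OF funpow_sig_in_H[OF h] h, where k = a] ab(3) by simp
  then have "?v \<le> b - a"
    using val_le_period[OF h] ab(1) by simp
  then have "b - a = ?v"
    using ab by simp
  then show ?thesis
    using period by simp
qed

lemma funpow_sig_Nv:
  assumes h: "h \<in> H G"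
  shows "(sig G ^^ Nv G (vtx G h)) h = h"
proof -
  have "(sig G ^^ (q * val G (vtx G h))) h = h" for q
    by (induction q) (simp_all add: funpow_add funpow_sig_val[OF h])
  then show ?thesis
    unfolding Nv_def .
qed

lemma Nv_pos: "h \<in> H G \<Longrightarrow> 1 \<le> Nv G (vtx G h)"
  unfolding Nv_def using mult_ge_1[OF vtx_in_V] val_pos by (simp add: Suc_le_eq)

lemma dist_walk:
  assumes "u \<in> V G" "w \<in> V G"
  obtains vs es where "is_walk G (E G) vs es" "hd vs = u" "last vs = w" "length es = dist G u w"
proof -
  have "\<exists>n vs es. is_walk G (E G) vs es \<and> hd vs = u \<and> last vs = w \<and> length es = n"
    using reach_connected[OF assms] unfolding reach_def by blast
  from LeastI_ex[OF this] show ?thesis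
    using that unfolding dist_def by blast
qed

lemma dist_le: "is_walk G (E G) vs es \<Longrightarrow> hd vs = u \<Longrightarrow> last vs = w \<Longrightarrow> dist G u w \<le> length es"
  unfolding dist_def by (rule Least_le) blast

lemma dist_self: "dist G w w = 0"
  using dist_le[of "[w]" "[]"] by (simp add: is_walk_Nil)

lemma dist_eq_0:
  assumes "u \<in> V G" "w \<in> V G" "dist G u w = 0"
  shows "u = w"
proof -
  obtain vs es where "is_walk G (E G) vs es" "hd vs = u" "last vs = w" "length es = 0"
    using dist_walk[OF assms(1,2)] assms(3) by metis
  then show ?thesis
    by (auto simp: is_walk_Nil)
qed

lemma dist_edge_le:
  assumes "e \<in> E G" "ends G e = {a, b}" "b \<in> V G" "w \<in> V G"
  shows "dist G a w \<le> dist G b w + 1"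
proof -
  obtain vs es where vs: "is_walk G (E G) vs es" "hd vs = b" "last vs = w" "length es = dist G b w"
    using dist_walk[OF assms(3,4)] .
  moreover have "vs \<noteq> []"
    using is_walk_nonempty[OF vs(1)] .
  ultimately have "is_walk G (E G) (a # vs) (e # es)" "last (a # vs) = w"
    using assms(1,2) by (auto simp: is_walk_Cons)
  then show ?thesis
    using dist_le[of "a # vs" "e # es" a w] vs(4) by simp
qed

lemma dist_predecessor:
  assumes "u \<in> V G" "w \<in> V G" "u \<noteq> w"
  obtains e a where "e \<in> E G" "ends G e = {a, u}" "a \<in> V G" "dist G a w + 1 = dist G u w"
proof -
  obtain vs es where vs: "is_walk G (E G) vs es" "hd vs = u" "last vs = w" "length es = dist G u w"
    using dist_walk[OF assms(1,2)] .
  have "es \<noteq> []"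
    using vs assms(3) by (auto simp: is_walk_Nil)
  then obtain e es' vs' where "es = e # es'" "vs = u # vs'"
    using is_walk_nonempty[OF vs(1)] vs(2) by (metis list.collapse)
  with vs have walk: "vs' \<noteq> []" "e \<in> E G" "ends G e = {u, hd vs'}" "is_walk G (E G) vs' es'"
    "last vs' = w" by (auto simp: is_walk_Cons)
  have a: "hd vs' \<in> V G"
    using walk(3) ends_subset_V by blast
  have "dist G (hd vs') w + 1 \<le> dist G u w"
    using dist_le[OF walk(4) refl walk(5)] vs(4) \<open>es = e # es'\<close> by simp
  moreover have "dist G u w \<le> dist G (hd vs') w + 1"
    using dist_edge_le[OF walk(2,3) a assms(2)] .
  ultimately show ?thesis
    using that walk a by (simp add: insert_commute)
qed

end

section \<open>The component of \<open>G - i\<close> at \<open>vS\<close>\<close>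

locale bridge_tree = brauer +
  fixes i :: 'e and vS vL :: 'v
  assumes ends_i: "ends G i = {vS, vL}" and vS_neq_vL: "vS \<noteq> vL"
    and bridge: "(compV G i vS, compE G i vS) \<noteq> (compV G i vL, compE G i vL)"
    and tree: "is_tree G (compV G i vS) (compE G i vS)"
begin

abbreviation "CV \<equiv> compV G i vS"
abbreviation "CE \<equiv> compE G i vS"
abbreviation "depth u \<equiv> dist G u vS"

lemma vS_in_V: "vS \<in> V G"
  using ends_i ends_subset_V by blast

lemma vS_in_CV: "vS \<in> CV"
  unfolding compV_def using vS_in_V reach_refl[of G "E G - {i}" vS] by simp

lemma CV_subset_V: "x \<in> CV \<Longrightarrow> x \<in> V G"
  unfolding compV_def by blast

lemma CE_subset: "e \<in> CE \<Longrightarrow> e \<in> E G \<and> e \<noteq> i \<and> ends G e \<subseteq> CV"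
  unfolding compE_def by blast

lemma vL_notin_CV: "vL \<notin> CV"
proof
  assume "vL \<in> CV"
  then have r: "reach G (E G - {i}) vS vL"
    unfolding compV_def by blast
  then have "reach G (E G - {i}) vS u \<longleftrightarrow> reach G (E G - {i}) vL u" for u
    using reach_trans[OF reach_sym[OF r], of u] reach_trans[OF r, of u] by blast
  then have "compV G i vS = compV G i vL"
    unfolding compV_def by simp
  then show False
    using bridge unfolding compE_def by simp
qed

lemma edge_from_CV:
  assumes "x \<in> CV" "e \<in> E G" "e \<noteq> i" "ends G e = {x, y}"
  shows "y \<in> CV" and "e \<in> CE"
proof -
  have "reach G (E G - {i}) vS x" "reach G (E G - {i}) x y"
    using assms reach_edge[of e "E G - {i}" G x y] unfolding compV_def by auto
  then have "reach G (E G - {i}) vS y"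
    by (rule reach_trans)
  moreover have "y \<in> V G"
    using assms(4) ends_subset_V by blast
  ultimately show y: "y \<in> CV"
    unfolding compV_def by blast
  show "e \<in> CE"
    unfolding compE_def using assms y by simp
qed

lemma no_cycle: "\<not> has_cycle G CE"
  using tree unfolding is_tree_def by blast

lemma CE_no_loop:
  assumes "e \<in> CE" "ends G e = {x, y}"
  shows "x \<noteq> y"
proof
  assume "x = y"
  then have "is_walk G CE [x, x] [e]"
    using assms by (simp add: is_walk_Cons is_walk_Nil)
  then have "has_cycle G CE"
    unfolding has_cycle_def by (intro exI[of _ "[x, x]"] exI[of _ "[e]"]) simp
  then show False
    using no_cycle by blast
qed

lemma vtx_ohe_i_half:
  assumes "h \<in> H G" "edg G h = i" "vtx G h = vS"
  shows "vtx G (ohe G h) = vL"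
proof -
  have "{vS, vtx G (ohe G h)} = {vS, vL}"
    using ends_edg[OF assms(1)] assms(2,3) ends_i by simp
  then show ?thesis
    using vS_neq_vL by (simp add: doubleton_eq_iff)
qed

lemma parent_edge:
  assumes "u \<in> CV" "u \<noteq> vS"
  obtains e a where "e \<in> CE" "ends G e = {a, u}" "a \<in> CV" "depth a + 1 = depth u"
proof -
  obtain e a where e: "e \<in> E G" "ends G e = {a, u}" "a \<in> V G" "depth a + 1 = depth u"
    using dist_predecessor[OF CV_subset_V[OF assms(1)] vS_in_V assms(2)] .
  have "e \<noteq> i"
  proof
    assume "e = i"
    then have "u = vL"
      using e(2) ends_i assms(2) by (metis doubleton_eq_iff)
    then show False
      using assms(1) vL_notin_CV by simp
  qed
  moreover have "ends G e = {u, a}"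
    using e(2) by (simp add: insert_commute)
  ultimately show ?thesis
    using that edge_from_CV[OF assms(1) e(1)] e by blast
qed

text \<open>Prolonging the higher end of a valley path along its parent edge either closes a
  cycle or gives a valley path with smaller end depths; hence a tree has no valley paths.\<close>

definition valley_path :: "'v list \<Rightarrow> 'e list \<Rightarrow> bool" where
  "valley_path vs es \<longleftrightarrow> is_walk G CE vs es \<and> distinct vs \<and> distinct es \<and> 2 \<le> length es \<and>
     set vs \<subseteq> CV \<and>
     (\<forall>v\<in>set vs. v \<noteq> hd vs \<longrightarrow> v \<noteq> last vs \<longrightarrow> depth (hd vs) \<le> depth v \<and> depth (last vs) \<le> depth v)"

lemma valley_path_rev: "valley_path vs es \<Longrightarrow> valley_path (rev vs) (rev es)"
  unfolding valley_path_def
  by (auto dest: is_walk_rev simp: hd_rev last_rev)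

lemma valley_path_ends:
  assumes "valley_path vs es"
  shows "hd vs \<noteq> last vs" and "hd vs \<in> CV" and "last vs \<in> CV"
proof -
  have facts: "length vs = length es + 1" "2 \<le> length es" "distinct vs" "set vs \<subseteq> CV"
    using assms unfolding valley_path_def is_walk_def by auto
  then obtain u rest where vs: "vs = u # rest"
    by (cases vs) auto
  with facts have "rest \<noteq> []" "u \<notin> set rest"
    by auto
  then show "hd vs \<noteq> last vs" "hd vs \<in> CV" "last vs \<in> CV"
    using vs facts(4) by auto
qed

lemma valley_path_hd_neq_root:
  assumes "valley_path vs es" "depth (last vs) \<le> depth (hd vs)"
  shows "hd vs \<noteq> vS"
proof
  assume "hd vs = vS"
  then have "depth (last vs) = 0"
    using assms(2) dist_self by simp
  then have "last vs = vS"
    using dist_eq_0 CV_subset_V[OF valley_path_ends(3)[OF assms(1)]] vS_in_V by blast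
  then show False
    using valley_path_ends(1)[OF assms(1)] \<open>hd vs = vS\<close> by simp
qed

lemma valley_path_closing_edge:
  assumes valley: "valley_path vs es" and e: "e \<in> CE" "ends G e = {last vs, hd vs}"
  shows "has_cycle G CE"
proof -
  have walk: "is_walk G CE vs es" and dist: "distinct vs" "distinct es" and len: "2 \<le> length es"
    using valley unfolding valley_path_def by auto
  have "e \<notin> set es"
    using distinct_walk_edge_not_joining_ends[OF walk dist(1) len] e(2) by (auto simp: insert_commute)
  moreover have "is_walk G CE (last vs # vs) (e # es)"
    using walk e is_walk_nonempty[OF walk] by (simp add: is_walk_Cons)
  ultimately show ?thesis
    unfolding has_cycle_def using dist is_walk_nonempty[OF walk]
    by (intro exI[of _ "last vs # vs"] exI[of _ "e # es"]) simp
qed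

lemma valley_path_Cons:
  assumes valley: "valley_path vs es" and le: "depth (last vs) \<le> depth (hd vs)"
    and e: "e \<in> CE" "ends G e = {a, hd vs}" "a \<in> CV" "depth a + 1 = depth (hd vs)"
    and "a \<noteq> last vs"
  shows "valley_path (a # vs) (e # es)"
proof -
  have walk: "is_walk G CE vs es" and dist: "distinct vs" "distinct es" and len: "2 \<le> length es"
    and sub: "set vs \<subseteq> CV"
    and interior: "\<And>v. v \<in> set vs \<Longrightarrow> v \<noteq> hd vs \<Longrightarrow> v \<noteq> last vs \<Longrightarrow>
      depth (hd vs) \<le> depth v \<and> depth (last vs) \<le> depth v"
    using valley unfolding valley_path_def by auto
  have "vs \<noteq> []"
    using is_walk_nonempty[OF walk] .
  have "a \<notin> set vs"
  proof
    assume "a \<in> set vs"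
    moreover have "a \<noteq> hd vs"
      using e(4) by auto
    ultimately have "depth (hd vs) \<le> depth a"
      using interior \<open>a \<noteq> last vs\<close> by blast
    then show False
      using e(4) by simp
  qed
  then have "e \<notin> set es"
    using walk_edge_ends_subset[OF walk] e(2) \<open>vs \<noteq> []\<close> by auto
  have "depth a \<le> depth v \<and> depth (last vs) \<le> depth v"
    if "v \<in> set vs" "v \<noteq> last vs" for v
    using interior[OF that(1) _ that(2)] le e(4) by (cases "v = hd vs") auto
  then show ?thesis
    unfolding valley_path_def
    using walk e \<open>vs \<noteq> []\<close> dist len sub \<open>a \<notin> set vs\<close> \<open>e \<notin> set es\<close>
    by (simp add: is_walk_Cons)
qed

lemma valley_path_extend:
  assumes valley: "valley_path vs es" and le: "depth (last vs) \<le> depth (hd vs)"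
  shows "has_cycle G CE \<or>
    (\<exists>vs' es'. valley_path vs' es' \<and> depth (hd vs') + depth (last vs') < depth (hd vs) + depth (last vs))"
proof -
  obtain e a where e: "e \<in> CE" "ends G e = {a, hd vs}" "a \<in> CV" "depth a + 1 = depth (hd vs)"
    using parent_edge valley_path_ends(2)[OF valley] valley_path_hd_neq_root[OF assms] by metis
  show ?thesis
  proof (cases "a = last vs")
    case True
    then show ?thesis
      using valley_path_closing_edge[OF valley e(1)] e(2) by blast
  next
    case False
    then have "valley_path (a # vs) (e # es)"
      using valley_path_Cons[OF assms e] by blast
    moreover have "depth (hd (a # vs)) + depth (last (a # vs)) < depth (hd vs) + depth (last vs)"
      using e(4) is_walk_nonempty valley unfolding valley_path_def by auto
    ultimately show ?thesis
      by blast
  qed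
qed

lemma valley_path_descend:
  assumes "valley_path vs es"
  shows "has_cycle G CE \<or>
    (\<exists>vs' es'. valley_path vs' es' \<and> depth (hd vs') + depth (last vs') < depth (hd vs) + depth (last vs))"
proof (cases "depth (last vs) \<le> depth (hd vs)")
  case True
  then show ?thesis
    using valley_path_extend[OF assms] by blast
next
  case False
  have "vs \<noteq> []"
    using assms is_walk_nonempty unfolding valley_path_def by blast
  then show ?thesis
    using valley_path_extend[OF valley_path_rev[OF assms]] False by (simp add: hd_rev last_rev ac_simps)
qed

lemma no_valley_path: "\<not> valley_path vs es"
proof (induction "depth (hd vs) + depth (last vs)" arbitrary: vs es rule: less_induct)
  case less
  then show ?case
    using valley_path_descend no_cycle by blast
qed

lemma edge_towards_root_unique:
  assumes "e1 \<in> CE" "ends G e1 = {w, z1}" "depth z1 \<le> depth w"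
    and "e2 \<in> CE" "ends G e2 = {w, z2}" "depth z2 \<le> depth w"
  shows "e1 = e2"
proof (rule ccontr)
  assume "e1 \<noteq> e2"
  have "z1 \<noteq> w" "z2 \<noteq> w"
    using CE_no_loop assms by metis+
  have in_CV: "w \<in> CV" "z1 \<in> CV" "z2 \<in> CV"
    using CE_subset assms(1,2,4,5) by auto
  have walk: "is_walk G CE [z1, w, z2] [e1, e2]"
    using assms by (simp add: is_walk_Cons is_walk_Nil insert_commute)
  show False
  proof (cases "z1 = z2")
    case True
    have "is_walk G CE [w, z1, w] [e1, e2]"
      using assms True by (simp add: is_walk_Cons is_walk_Nil insert_commute)
    then have "has_cycle G CE"
      unfolding has_cycle_def using \<open>e1 \<noteq> e2\<close> \<open>z1 \<noteq> w\<close>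
      by (intro exI[of _ "[w, z1, w]"] exI[of _ "[e1, e2]"]) simp
    then show False
      using no_cycle by blast
  next
    case False
    then have "valley_path [z1, w, z2] [e1, e2]"
      unfolding valley_path_def
      using walk \<open>e1 \<noteq> e2\<close> \<open>z1 \<noteq> w\<close> \<open>z2 \<noteq> w\<close> in_CV assms(3,6) by auto
    then show False
      using no_valley_path by blast
  qed
qed

lemma depth_le_across_edge:
  assumes "e \<in> CE" "ends G e = {x, x'}"
  shows "depth x' \<le> depth x + 1"
proof -
  have "x \<in> CV" "e \<in> E G" "ends G e = {x', x}"
    using CE_subset[OF assms(1)] assms(2) by (auto simp: insert_commute)
  then show ?thesis
    using dist_edge_le[OF _ _ CV_subset_V vS_in_V] by simp
qed

lemma depth_child_of_root:
  assumes "e \<in> CE" "ends G e = {vS, x'}"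
  shows "depth x' = 1"
proof -
  have "x' \<in> CV" "x' \<noteq> vS"
    using CE_subset[OF assms(1)] CE_no_loop[OF assms] assms(2) by auto
  then have "depth x' \<noteq> 0"
    using dist_eq_0 CV_subset_V vS_in_V by blast
  then show ?thesis
    using depth_le_across_edge[OF assms] dist_self by simp
qed

lemma depth_child:
  assumes e: "e \<in> CE" "ends G e = {x, x'}"
    and parent: "e0 \<in> CE" "ends G e0 = {x, y}" "depth y + 1 = depth x" and "e0 \<noteq> e"
  shows "depth x' = depth x + 1"
proof -
  have "\<not> depth x' \<le> depth x"
    using edge_towards_root_unique[OF parent(1,2) _ e] parent(3) \<open>e0 \<noteq> e\<close> by auto
  then show ?thesis
    using depth_le_across_edge[OF e] by simp
qed

end

section \<open>Strings as walks around vertices\<close>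

text \<open>A letter turns at the vertex of its arrow from the half-edge \<open>src_half\<close> to the
  half-edge \<open>tgt_half\<close>, which lie on its source and target edges.\<close>

fun src_half :: "('v,'e,'h) bgraph \<Rightarrow> 'h letter \<Rightarrow> 'h" where
  "src_half G (Dir h) = h" | "src_half G (Inv h) = sig G h"

fun tgt_half :: "('v,'e,'h) bgraph \<Rightarrow> 'h letter \<Rightarrow> 'h" where
  "tgt_half G (Dir h) = sig G h" | "tgt_half G (Inv h) = h"

lemma lsrc_eq: "lsrc G c = edg G (src_half G c)"
  by (cases c) auto

lemma ltgt_eq: "ltgt G c = edg G (tgt_half G c)"
  by (cases c) auto

lemma letter_turn:
  "if is_dir c then tgt_half G c = sig G (src_half G c) else sig G (tgt_half G c) = src_half G c"
  by (cases c) auto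

context brauer
begin

lemma src_half_in_H: "arr c \<in> H G \<Longrightarrow> src_half G c \<in> H G"
  by (cases c) (auto simp: sig_in_H)

lemma tgt_half_in_H: "arr c \<in> H G \<Longrightarrow> tgt_half G c \<in> H G"
  by (cases c) (auto simp: sig_in_H)

lemma vtx_src_half: "arr c \<in> H G \<Longrightarrow> vtx G (src_half G c) = vtx G (arr c)"
  by (cases c) (auto simp: vtx_sig)

lemma vtx_tgt_half: "arr c \<in> H G \<Longrightarrow> vtx G (tgt_half G c) = vtx G (arr c)"
  by (cases c) (auto simp: vtx_sig)

end

locale brauer_string = brauer +
  fixes cs :: "'h letter list"
  assumes string: "is_string G cs"
begin

lemma letter_arrow: "k < length cs \<Longrightarrow> is_arrow G (arr (cs ! k))"
  using string unfolding is_string_def by auto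

lemma letter_in_H: "k < length cs \<Longrightarrow> arr (cs ! k) \<in> H G"
  using letter_arrow unfolding is_arrow_def by blast

lemma letters_compose:
  "Suc k < length cs \<Longrightarrow> ltgt G (cs ! k) = lsrc G (cs ! Suc k) \<and> cs ! Suc k \<noteq> linv (cs ! k)"
  using string unfolding is_string_def by blast

definition run :: "nat \<Rightarrow> nat \<Rightarrow> bool" where
  "run a k \<longleftrightarrow> a \<le> k \<and> k < length cs \<and> (\<forall>j. a \<le> j \<and> j \<le> k \<longrightarrow> is_dir (cs ! j) = is_dir (cs ! a))"

lemma run_single: "k < length cs \<Longrightarrow> run k k"
  unfolding run_def using le_antisym by blast

lemma run_bounds: "run a k \<Longrightarrow> a \<le> k \<and> k < length cs"
  unfolding run_def by blast

lemma run_dir: "run a k \<Longrightarrow> a \<le> j \<Longrightarrow> j \<le> k \<Longrightarrow> is_dir (cs ! j) = is_dir (cs ! a)"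
  unfolding run_def by blast

lemma run_Suc:
  assumes r: "run a k" and "Suc k < length cs" "is_dir (cs ! Suc k) = is_dir (cs ! k)"
  shows "run a (Suc k)"
proof -
  have "a \<le> k"
    using r unfolding run_def by blast
  have "is_dir (cs ! j) = is_dir (cs ! a)" if "a \<le> j" "j \<le> Suc k" for j
  proof (cases "j = Suc k")
    case True
    then show ?thesis
      using run_dir[OF r \<open>a \<le> k\<close> order_refl] assms(3) by simp
  next
    case False
    then show ?thesis
      using run_dir[OF r, of j] that by simp
  qed
  moreover have "a \<le> Suc k"
    using \<open>a \<le> k\<close> by simp
  ultimately show ?thesis
    unfolding run_def using assms(2) by blast
qed

lemma run_segment_nonzero:
  assumes "run a k"
  defines "p \<equiv> map arr (take (Suc k - a) (drop a cs))"
  shows "nonzero_path G (if is_dir (cs ! a) then p else rev p)"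
proof -
  have ak: "a < Suc k" "Suc k \<le> length cs"
    using run_bounds[OF assms(1)] by auto
  have same: "is_dir c = is_dir (cs ! a)" if c: "c \<in> set (take (Suc k - a) (drop a cs))" for c
  proof -
    obtain t where "t < Suc k - a" "c = cs ! (a + t)"
      using c ak by (auto simp: in_set_conv_nth)
    then show ?thesis
      using run_dir[OF assms(1), of "a + t"] by simp
  qed
  have nz: "((\<forall>c\<in>set (take (Suc k - a) (drop a cs)). is_dir c) \<longrightarrow> nonzero_path G p) \<and>
      ((\<forall>c\<in>set (take (Suc k - a) (drop a cs)). \<not> is_dir c) \<longrightarrow> nonzero_path G (rev p))"
    using string ak unfolding is_string_def p_def by blast
  show ?thesis
  proof (cases "is_dir (cs ! a)")
    case True
    then have "\<forall>c\<in>set (take (Suc k - a) (drop a cs)). is_dir c"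
      using same by blast
    then show ?thesis
      using nz True by simp
  next
    case False
    then have "\<forall>c\<in>set (take (Suc k - a) (drop a cs)). \<not> is_dir c"
      using same by blast
    then show ?thesis
      using nz False by simp
  qed
qed

lemma src_half_next_same_dir:
  assumes k: "Suc k < length cs" and dir: "is_dir (cs ! Suc k) = is_dir (cs ! k)"
  shows "src_half G (cs ! Suc k) = tgt_half G (cs ! k)"
proof -
  have "run k (Suc k)"
    using run_Suc[OF run_single] k dir by simp
  then have nz: "nonzero_path G (if is_dir (cs ! k) then map arr (take (Suc (Suc k) - k) (drop k cs))
      else rev (map arr (take (Suc (Suc k) - k) (drop k cs))))"
    by (rule run_segment_nonzero)
  have "drop k cs = cs ! k # cs ! Suc k # drop (Suc (Suc k)) cs"
    using k by (metis Cons_nth_drop_Suc Suc_lessD)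
  then have "map arr (take (Suc (Suc k) - k) (drop k cs)) = [arr (cs ! k), arr (cs ! Suc k)]"
    by simp
  then have "nonzero_path G (if is_dir (cs ! k) then [arr (cs ! k), arr (cs ! Suc k)]
      else [arr (cs ! Suc k), arr (cs ! k)])"
    using nz by (cases "is_dir (cs ! k)") simp_all
  then have "if is_dir (cs ! k) then arr (cs ! Suc k) = sig G (arr (cs ! k))
      else arr (cs ! k) = sig G (arr (cs ! Suc k))"
    unfolding nonzero_path_def by (cases "is_dir (cs ! k)") (simp_all add: nth_Cons')
  with dir show ?thesis
    by (cases "cs ! k"; cases "cs ! Suc k") simp_all
qed

lemma src_half_next_dir_change:
  assumes k: "Suc k < length cs" and dir: "is_dir (cs ! Suc k) \<noteq> is_dir (cs ! k)"
  shows "src_half G (cs ! Suc k) = ohe G (tgt_half G (cs ! k))"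
proof -
  have H: "arr (cs ! k) \<in> H G" "arr (cs ! Suc k) \<in> H G"
    using letter_in_H k by auto
  have "edg G (src_half G (cs ! Suc k)) = edg G (tgt_half G (cs ! k))"
    using letters_compose[OF k] by (simp add: lsrc_eq ltgt_eq)
  moreover have "src_half G (cs ! Suc k) \<noteq> tgt_half G (cs ! k)"
  proof
    assume eq: "src_half G (cs ! Suc k) = tgt_half G (cs ! k)"
    have "cs ! Suc k = linv (cs ! k)"
    proof (cases "cs ! k")
      case (Dir h)
      then obtain h' where "cs ! Suc k = Inv h'"
        using dir by (cases "cs ! Suc k") auto
      with Dir eq have "sig G h' = sig G h"
        by simp
      then have "h' = h"
        using sig_inj[of h' h] H Dir \<open>cs ! Suc k = Inv h'\<close> by simp
      with Dir \<open>cs ! Suc k = Inv h'\<close> show ?thesis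
        by simp
    next
      case (Inv h)
      then obtain h' where "cs ! Suc k = Dir h'"
        using dir by (cases "cs ! Suc k") auto
      with Inv eq show ?thesis
        by simp
    qed
    then show False
      using letters_compose[OF k] by simp
  qed
  ultimately show ?thesis
    using same_edg_cases[OF tgt_half_in_H[OF H(1)] src_half_in_H[OF H(2)]] by blast
qed

lemma run_shorten: "run a k' \<Longrightarrow> a \<le> k \<Longrightarrow> k \<le> k' \<Longrightarrow> run a k"
  unfolding run_def by (meson le_trans order.strict_trans1)

lemma run_turn:
  assumes "run a k"
  shows "if is_dir (cs ! a) then tgt_half G (cs ! k) = (sig G ^^ (Suc k - a)) (src_half G (cs ! a))
    else (sig G ^^ (Suc k - a)) (tgt_half G (cs ! k)) = src_half G (cs ! a)"
  using assms
proof (induction k)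
  case 0
  then have "a = 0"
    using run_bounds by blast
  then show ?case
    using letter_turn[of "cs ! 0" G] by simp
next
  case (Suc k)
  show ?case
  proof (cases "a = Suc k")
    case True
    then show ?thesis
      using letter_turn[of "cs ! Suc k" G] by simp
  next
    case False
    then have ak: "a \<le> k" "Suc k < length cs"
      using run_bounds[OF Suc.prems] by auto
    then have r: "run a k"
      using run_shorten[OF Suc.prems] by simp
    have dir: "is_dir (cs ! Suc k) = is_dir (cs ! a)" "is_dir (cs ! k) = is_dir (cs ! a)"
      using run_dir[OF Suc.prems, of "Suc k"] run_dir[OF Suc.prems, of k] ak by simp_all
    then have src: "src_half G (cs ! Suc k) = tgt_half G (cs ! k)"
      using src_half_next_same_dir[OF ak(2)] by simp
    have step: "Suc (Suc k) - a = Suc (Suc k - a)"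
      using ak by simp
    show ?thesis
    proof (cases "is_dir (cs ! a)")
      case True
      then show ?thesis
        using Suc.IH[OF r] letter_turn[of "cs ! Suc k" G] dir src step by simp
    next
      case False
      then have "sig G (tgt_half G (cs ! Suc k)) = tgt_half G (cs ! k)"
        using letter_turn[of "cs ! Suc k" G] dir src by simp
      then show ?thesis
        using Suc.IH[OF r] False step by (simp add: funpow_Suc_right del: funpow.simps)
    qed
  qed
qed

lemma vtx_run_tgt:
  assumes "run a k"
  shows "vtx G (tgt_half G (cs ! k)) = vtx G (src_half G (cs ! a))"
proof -
  have "arr (cs ! a) \<in> H G" "arr (cs ! k) \<in> H G"
    using run_bounds[OF assms] letter_in_H by auto
  then show ?thesis
    using run_turn[OF assms] vtx_funpow_sig src_half_in_H tgt_half_in_H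
    by (cases "is_dir (cs ! a)") metis+
qed

lemma closed_run_period:
  assumes "run a k" "tgt_half G (cs ! k) = src_half G (cs ! a)"
  shows "(sig G ^^ (Suc k - a)) (src_half G (cs ! a)) = src_half G (cs ! a)"
  using run_turn[OF assms(1)] assms(2) by (cases "is_dir (cs ! a)") auto

text \<open>The run read as a path of the quiver starts at \<open>src_half\<close> of its first letter if
  it is direct, and at \<open>tgt_half\<close> of its last letter if it is inverse.\<close>

lemma run_nonzero:
  assumes r: "run a k"
  defines "x \<equiv> vtx G (src_half G (cs ! a))"
    and "f \<equiv> if is_dir (cs ! a) then src_half G (cs ! a) else tgt_half G (cs ! k)"
  shows "Suc k - a < Nv G x \<or> (Suc k - a = Nv G x \<and> Nv G (vtx G (ohe G f)) < Nv G x)"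
proof -
  let ?p = "map arr (take (Suc k - a) (drop a cs))"
  have ak: "a \<le> k" "k < length cs"
    using run_bounds[OF r] by auto
  have len: "length ?p = Suc k - a"
    using ak by simp
  have "?p \<noteq> []"
    using len ak by auto
  then have "hd ?p = arr (cs ! a)" "last ?p = arr (cs ! k)"
    using ak by (simp_all add: hd_map last_map hd_drop_conv_nth last_conv_nth)
  then have "hd (if is_dir (cs ! a) then ?p else rev ?p) = f"
    unfolding f_def using run_dir[OF r, of k] ak
    by (cases "cs ! a"; cases "cs ! k") (auto simp: hd_rev)
  moreover have "vtx G f = x"
    unfolding f_def x_def using vtx_run_tgt[OF r] by simp
  ultimately show ?thesis
    using run_segment_nonzero[OF r] len unfolding nonzero_path_def by (auto split: if_splits)
qed

lemma run_length_le: "run a k \<Longrightarrow> Suc k - a \<le> Nv G (vtx G (src_half G (cs ! a)))"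
  using run_nonzero by fastforce

lemma closed_run_length:
  assumes "run a k" "tgt_half G (cs ! k) = src_half G (cs ! a)"
  defines "x \<equiv> vtx G (src_half G (cs ! a))"
  shows "Suc k - a < Nv G x \<or> (Suc k - a = Nv G x \<and> Nv G (vtx G (ohe G (src_half G (cs ! a)))) < Nv G x)"
  using run_nonzero[OF assms(1)] assms(2) unfolding x_def by (simp split: if_splits)

lemma run_of_cycle_prefix:
  assumes prefix: "take l cs = map Dir p \<or> take l cs = map Inv (rev p)"
    and p: "p = map (\<lambda>k. (sig G ^^ k) h) [0..<l]" and period: "(sig G ^^ l) h = h"
    and l: "0 < l" "l \<le> length cs"
  shows "run 0 (l - 1)" and "src_half G (cs ! 0) = h" and "tgt_half G (cs ! (l - 1)) = h"
proof -
  have sig_last: "sig G ((sig G ^^ (l - 1)) h) = h"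
    using period l(1) by (metis Suc_diff_1 funpow.simps(2) o_apply)
  have nth: "cs ! t = take l cs ! t" if "t < l" for t
    using that by simp
  have "run 0 (l - 1) \<and> src_half G (cs ! 0) = h \<and> tgt_half G (cs ! (l - 1)) = h"
  proof (cases "take l cs = map Dir p")
    case True
    then have letters: "cs ! t = Dir ((sig G ^^ t) h)" if "t < l" for t
      using nth[OF that] that p by simp
    then have "run 0 (l - 1)"
      unfolding run_def using l by auto
    then show ?thesis
      using letters[of 0] letters[of "l - 1"] l sig_last by simp
  next
    case False
    then have "take l cs = map Inv (rev p)"
      using prefix by blast
    then have letters: "cs ! t = Inv ((sig G ^^ (l - 1 - t)) h)" if "t < l" for t
      using nth[OF that] that p by (simp add: rev_nth)
    then have "run 0 (l - 1)"
      unfolding run_def using l by auto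
    then show ?thesis
      using letters[of 0] letters[of "l - 1"] l sig_last by simp
  qed
  then show "run 0 (l - 1)" "src_half G (cs ! 0) = h" "tgt_half G (cs ! (l - 1)) = h"
    by blast+
qed

end

section \<open>Strings leaving the unbalanced edge under the star condition\<close>

text \<open>The assumptions \<open>mult_CV\<close> and \<open>grd_decreasing\<close> are the star condition with respect
  to \<open>i\<close>.\<close>

locale star_counterexample = bridge_tree + brauer_string +
  fixes l :: nat
  assumes l_less: "l < length cs"
    and hd_src: "lsrc G (hd cs) = i" and last_tgt: "ltgt G (last cs) = i"
    and prefix: "(\<exists>p\<in>Pset G. take l cs = map Dir p) \<or> (\<exists>p\<in>Pset G. take l cs = map Inv (rev p))"
    and grd_vS_vL: "grd G vS < grd G vL"
    and mult_CV: "\<And>v. v \<in> compV G i vS \<Longrightarrow> mult G v < 2"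
    and grd_decreasing: "\<And>v w e. v \<in> compV G i vS \<Longrightarrow> w \<in> compV G i vS \<Longrightarrow> e \<in> compE G i vS \<Longrightarrow>
      ends G e = {v, w} \<Longrightarrow> dist G v vS + 1 = dist G w vS \<Longrightarrow> grd G w \<le> grd G v"
begin

lemma Nv_eq_val: "x \<in> CV \<Longrightarrow> Nv G x = val G x"
  using mult_CV[of x] mult_ge_1[OF CV_subset_V, of x] unfolding Nv_def by simp

lemma prefix_run:
  obtains h0 where "h0 \<in> H G" "edg G h0 = i" "vtx G h0 = vL" "vtx G (ohe G h0) = vS"
    and "l = Nv G vL" "run 0 (l - 1)" "src_half G (cs ! 0) = h0" "tgt_half G (cs ! (l - 1)) = h0"
proof -
  obtain p where p: "p \<in> Pset G" "take l cs = map Dir p \<or> take l cs = map Inv (rev p)"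
    using prefix by blast
  then obtain j where j: "unbalanced G j" "p = r_path G j"
    unfolding Pset_def by blast
  then obtain h where h: "h \<in> H G" "edg G h = j" "vtx G h = vL_of G j"
    and p_eq: "p = map (\<lambda>k. (sig G ^^ k) h) [0..<Nv G (vtx G h)]"
    using r_path_unbalanced by metis
  have "l = length (take l cs)"
    using l_less by simp
  also have "\<dots> = length p"
    using p(2) by (elim disjE) (metis length_map, metis length_map length_rev)
  finally have l: "l = Nv G (vtx G h)"
    using p_eq by simp
  then have cycle: "p = map (\<lambda>k. (sig G ^^ k) h) [0..<l]" "(sig G ^^ l) h = h" "0 < l"
    using p_eq funpow_sig_Nv[OF h(1)] Nv_pos[OF h(1)] by simp_all
  note run = run_of_cycle_prefix[OF p(2) cycle less_imp_le[OF l_less]]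
  have "hd cs = cs ! 0"
    using l_less by (cases cs) auto
  then have "j = i"
    using hd_src h(2) run(2) by (simp add: lsrc_eq)
  then have "vtx G h = vL"
    using vL_of_eq[OF ends_i grd_vS_vL] h(3) by simp
  moreover have "vtx G (ohe G h) = vS"
    using ends_edg[OF h(1)] h(2) \<open>j = i\<close> calculation ends_i vS_neq_vL by (simp add: doubleton_eq_iff)
  ultimately show ?thesis
    using that h(1) h(2) \<open>j = i\<close> l run by simp
qed

lemma Nv_vS_less_Nv_vL: "Nv G vS < Nv G vL"
proof -
  obtain h0 where h0: "h0 \<in> H G" "vtx G h0 = vL" "vtx G (ohe G h0) = vS" "l = Nv G vL"
    and run: "run 0 (l - 1)" "src_half G (cs ! 0) = h0" "tgt_half G (cs ! (l - 1)) = h0"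
    using prefix_run by metis
  have "0 < l"
    using h0(1,2,4) Nv_pos by fastforce
  then show ?thesis
    using closed_run_length[OF run(1)] run(2,3) h0 by simp
qed

lemma src_half_after_prefix:
  "src_half G (cs ! l) \<in> H G \<and> edg G (src_half G (cs ! l)) = i \<and> vtx G (src_half G (cs ! l)) = vS"
proof -
  obtain h0 where h0: "h0 \<in> H G" "edg G h0 = i" "vtx G h0 = vL" "vtx G (ohe G h0) = vS"
    and run: "l = Nv G vL" "run 0 (l - 1)" "src_half G (cs ! 0) = h0" "tgt_half G (cs ! (l - 1)) = h0"
    using prefix_run by blast
  have "0 < l"
    using h0(1,3) run(1) Nv_pos by fastforce
  have "is_dir (cs ! l) \<noteq> is_dir (cs ! (l - 1))"
  proof
    assume "is_dir (cs ! l) = is_dir (cs ! (l - 1))"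
    then have "run 0 l"
      using run_Suc[OF run(2)] \<open>0 < l\<close> l_less by simp
    then show False
      using run_length_le[of 0 l] run(1,3) h0(3) by simp
  qed
  then have "src_half G (cs ! l) = ohe G h0"
    using src_half_next_dir_change[of "l - 1"] run(4) \<open>0 < l\<close> l_less by simp
  then show ?thesis
    using ohe[OF h0(1)] h0(2,4) by simp
qed

text \<open>\<open>outward a\<close>: the run starting with letter \<open>a\<close> enters its vertex \<open>x\<close> through
  the half-edge \<open>s\<close> from the side of the root, i.e. through \<open>i\<close> at \<open>x = vS\<close> or from the
  parent \<open>y\<close> of \<open>x\<close>; moreover \<open>y\<close> is not truncated.\<close>

definition outward :: "nat \<Rightarrow> bool" where
  "outward a \<longleftrightarrow>
    (let s = src_half G (cs ! a); x = vtx G s; y = vtx G (ohe G s)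
     in x \<in> CV \<and> 2 \<le> Nv G y \<and>
        (x = vS \<and> edg G s = i \<or> x \<noteq> vS \<and> edg G s \<in> CE \<and> depth y + 1 = depth x))"

lemma outward_after_prefix: "outward l"
proof -
  have s: "src_half G (cs ! l) \<in> H G" "edg G (src_half G (cs ! l)) = i" "vtx G (src_half G (cs ! l)) = vS"
    using src_half_after_prefix by blast+
  then have "vtx G (ohe G (src_half G (cs ! l))) = vL"
    using vtx_ohe_i_half by blast
  moreover have "2 \<le> Nv G vL"
    using Nv_vS_less_Nv_vL Nv_pos[OF s(1)] s(3) by simp
  ultimately show ?thesis
    unfolding outward_def Let_def using s vS_in_CV by simp
qed

text \<open>The only use of \<open>grd_decreasing\<close>; at non-truncated vertices \<open>grd\<close> is \<open>Nv\<close>.\<close>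

lemma outward_Nv_le:
  assumes out: "outward a" and a: "a < length cs"
  defines "s \<equiv> src_half G (cs ! a)"
  shows "Nv G (vtx G s) \<le> Nv G (vtx G (ohe G s))"
proof (cases "vtx G s = vS \<and> edg G s = i")
  case True
  then have "vtx G (ohe G s) = vL"
    using vtx_ohe_i_half src_half_in_H[OF letter_in_H[OF a]] unfolding s_def by blast
  then show ?thesis
    using True Nv_vS_less_Nv_vL by simp
next
  case False
  have s_H: "s \<in> H G"
    unfolding s_def using src_half_in_H letter_in_H a by simp
  have x_CV: "vtx G s \<in> CV"
    using out unfolding outward_def Let_def s_def by blast
  have e: "edg G s \<in> CE" "depth (vtx G (ohe G s)) + 1 = depth (vtx G s)"
    using out False unfolding outward_def Let_def s_def by auto
  moreover have ends: "ends G (edg G s) = {vtx G (ohe G s), vtx G s}"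
    using ends_edg[OF s_H] by (simp add: insert_commute)
  moreover have "vtx G (ohe G s) \<in> CV"
    using CE_subset[OF e(1)] ends by blast
  ultimately have "grd G (vtx G s) \<le> grd G (vtx G (ohe G s))"
    using grd_decreasing x_CV by blast
  moreover have "2 \<le> Nv G (vtx G s)"
    using letter_arrow[OF a] vtx_src_half[OF letter_in_H[OF a]] unfolding is_arrow_def s_def by simp
  moreover have "2 \<le> Nv G (vtx G (ohe G s))"
    using out unfolding outward_def Let_def s_def by blast
  ultimately show ?thesis
    by (simp add: grd_eq_Nv)
qed

text \<open>By multiplicity one, a run going once around its vertex has the full length \<open>Nv\<close>,
  which only a path ending on an edge with smaller \<open>Nv\<close> at the other end survives.\<close>

lemma outward_run_not_closed:
  assumes r: "run a k" and out: "outward a"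
  shows "tgt_half G (cs ! k) \<noteq> src_half G (cs ! a)"
proof
  assume closed: "tgt_half G (cs ! k) = src_half G (cs ! a)"
  define s where "s = src_half G (cs ! a)"
  have ak: "a \<le> k" "k < length cs"
    using run_bounds[OF r] by auto
  have s_H: "s \<in> H G"
    unfolding s_def using src_half_in_H letter_in_H ak by simp
  have "vtx G s \<in> CV"
    using out unfolding outward_def Let_def s_def by blast
  moreover have "val G (vtx G s) \<le> Suc k - a"
    using val_le_period[OF s_H _ closed_run_period[OF r closed, folded s_def]] ak by simp
  ultimately have "Nv G (vtx G (ohe G s)) < Nv G (vtx G s)"
    using closed_run_length[OF r closed] Nv_eq_val unfolding s_def by fastforce
  then show False
    using outward_Nv_le[OF out] ak unfolding s_def by fastforce
qed

lemma outward_run_avoids_i: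
  assumes r: "run a k" and out: "outward a"
  shows "ltgt G (cs ! k) \<noteq> i"
proof
  assume "ltgt G (cs ! k) = i"
  define s where "s = src_half G (cs ! a)"
  define t where "t = tgt_half G (cs ! k)"
  have ak: "a \<le> k" "k < length cs"
    using run_bounds[OF r] by auto
  have H: "s \<in> H G" "t \<in> H G"
    unfolding s_def t_def using src_half_in_H tgt_half_in_H letter_in_H ak by auto
  have t: "edg G t = i" "vtx G t = vtx G s"
    using \<open>ltgt G (cs ! k) = i\<close> vtx_run_tgt[OF r] unfolding s_def t_def by (simp_all add: ltgt_eq)
  then have "vtx G s \<in> {vS, vL}"
    using ends_edg[OF H(2)] ends_i by auto
  moreover have "vtx G s \<in> CV"
    using out unfolding outward_def Let_def s_def by blast
  ultimately have "vtx G s = vS"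
    using vL_notin_CV by auto
  then have "edg G s = i"
    using out unfolding outward_def Let_def s_def by blast
  moreover have "t \<noteq> s"
    using outward_run_not_closed[OF r out] unfolding s_def t_def .
  ultimately have "t = ohe G s"
    using same_edg_cases[OF H] t(1) by simp
  then show False
    using vtx_ohe_i_half[OF H(1) \<open>edg G s = i\<close> \<open>vtx G s = vS\<close>] t(2) \<open>vtx G s = vS\<close> vS_neq_vL
    by simp
qed

text \<open>In a tree only one edge at a vertex leads towards the root, and an outward run
  does not leave through its entry edge.\<close>

lemma outward_run_exit:
  assumes r: "run a k" and out: "outward a"
  defines "t \<equiv> tgt_half G (cs ! k)" and "x \<equiv> vtx G (src_half G (cs ! a))"
  shows "vtx G (ohe G t) \<in> CV" and "edg G t \<in> CE" and "depth (vtx G (ohe G t)) = depth x + 1"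
proof -
  define s where "s = src_half G (cs ! a)"
  have ak: "a \<le> k" "k < length cs"
    using run_bounds[OF r] by auto
  have H: "s \<in> H G" "t \<in> H G"
    unfolding s_def t_def using src_half_in_H tgt_half_in_H letter_in_H ak by auto
  have x_CV: "x \<in> CV"
    using out unfolding outward_def Let_def x_def by blast
  have "vtx G t = x"
    unfolding t_def x_def using vtx_run_tgt[OF r] .
  then have ends_t: "ends G (edg G t) = {x, vtx G (ohe G t)}"
    using ends_edg[OF H(2)] by simp
  have "edg G t \<noteq> i"
    using outward_run_avoids_i[OF r out] unfolding t_def by (simp add: ltgt_eq)
  then show "vtx G (ohe G t) \<in> CV" and t_CE: "edg G t \<in> CE"
    using edge_from_CV[OF x_CV edg_in_E[OF H(2)] _ ends_t] by auto
  show "depth (vtx G (ohe G t)) = depth x + 1"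
  proof (cases "x = vS")
    case True
    then show ?thesis
      using depth_child_of_root[OF t_CE] ends_t dist_self by simp
  next
    case False
    then have s_CE: "edg G s \<in> CE" and parent: "depth (vtx G (ohe G s)) + 1 = depth x"
      using out unfolding outward_def Let_def s_def x_def by auto
    have "t \<noteq> s"
      using outward_run_not_closed[OF r out] unfolding s_def t_def .
    moreover have "t \<noteq> ohe G s"
      using \<open>vtx G t = x\<close> parent by auto
    ultimately have "edg G s \<noteq> edg G t"
      using same_edg_cases[OF H] by metis
    moreover have "ends G (edg G s) = {x, vtx G (ohe G s)}"
      using ends_edg[OF H(1)] unfolding x_def s_def by simp
    ultimately show ?thesis
      using depth_child[OF t_CE ends_t s_CE _ parent] by simp
  qed
qed

lemma outward_after_turn:
  assumes r: "run a k" and out: "outward a" and k: "Suc k < length cs"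
    and turn: "is_dir (cs ! Suc k) \<noteq> is_dir (cs ! k)"
  shows "outward (Suc k)"
proof -
  define t where "t = tgt_half G (cs ! k)"
  have ak: "a \<le> k" "k < length cs"
    using run_bounds[OF r] by auto
  have t_H: "t \<in> H G"
    unfolding t_def using tgt_half_in_H letter_in_H ak by auto
  have src: "src_half G (cs ! Suc k) = ohe G t"
    unfolding t_def using src_half_next_dir_change[OF k] turn by simp
  note exit = outward_run_exit[OF r out, folded t_def]
  have "vtx G t = vtx G (src_half G (cs ! a))"
    unfolding t_def using vtx_run_tgt[OF r] .
  moreover have "2 \<le> Nv G (vtx G t)"
    using letter_arrow[of k] vtx_tgt_half[OF letter_in_H] ak unfolding is_arrow_def t_def by simp
  moreover have "vtx G (ohe G t) \<noteq> vS"
    using exit(3) dist_self by auto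
  ultimately show ?thesis
    unfolding outward_def Let_def src using exit ohe_ohe[OF t_H] ohe(3)[OF t_H] by simp
qed

lemma outward_runs: "l \<le> k \<Longrightarrow> k < length cs \<Longrightarrow> \<exists>a. run a k \<and> outward a"
proof (induction k rule: dec_induct)
  case base
  then show ?case
    using run_single outward_after_prefix by blast
next
  case (step k)
  then obtain a where r: "run a k" and out: "outward a"
    by auto
  show ?case
  proof (cases "is_dir (cs ! Suc k) = is_dir (cs ! k)")
    case True
    then show ?thesis
      using run_Suc[OF r step.prems] out by blast
  next
    case False
    then show ?thesis
      using outward_after_turn[OF r out step.prems] run_single[OF step.prems] by blast
  qed
qed

lemma impossible: False
proof -
  have "l \<le> length cs - 1" "length cs - 1 < length cs"
    using l_less by auto
  then obtain a where r: "run a (length cs - 1)" and out: "outward a"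
    using outward_runs by blast
  have "cs \<noteq> []"
    using l_less by auto
  then have "last cs = cs ! (length cs - 1)"
    by (simp add: last_conv_nth)
  then show False
    using outward_run_avoids_i[OF r out] last_tgt by simp
qed

end

theorem mainTheorem19:
  fixes G :: "('v,'e,'h) bgraph" and cs :: "'h letter list" and l :: nat
    and i :: 'e and vS vL :: 'v
  assumes "brauer_graph G"
    and "is_string G cs"
    and "l < length cs"
    and "lsrc G (hd cs) = i" and "ltgt G (last cs) = i"
    and "(\<exists>p\<in>Pset G. take l cs = map Dir p) \<or> (\<exists>p\<in>Pset G. take l cs = map Inv (rev p))"
    and "i \<in> E G" and "ends G i = {vS, vL}" and "grd G vS < grd G vL"
    and "(compV G i vS, compE G i vS) \<noteq> (compV G i vL, compE G i vL)"
    and "is_tree G (compV G i vS) (compE G i vS)"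
  shows "(\<exists>v\<in>compV G i vS. mult G v \<ge> 2) \<or>
         (\<exists>v\<in>compV G i vS. \<exists>w\<in>compV G i vS.
             (\<exists>e\<in>compE G i vS. ends G e = {v, w}) \<and>
             dist G v vS + 1 = dist G w vS \<and> grd G v < grd G w)"
proof (rule ccontr)
  assume "\<not> ?thesis"
  then have "\<And>v. v \<in> compV G i vS \<Longrightarrow> mult G v < 2"
    and "\<And>v w e. v \<in> compV G i vS \<Longrightarrow> w \<in> compV G i vS \<Longrightarrow> e \<in> compE G i vS \<Longrightarrow>
      ends G e = {v, w} \<Longrightarrow> dist G v vS + 1 = dist G w vS \<Longrightarrow> grd G w \<le> grd G v"
    by (meson not_le)+
  moreover have "vS \<noteq> vL"
    using assms(9) by auto
  ultimately interpret star_counterexample G i vS vL cs l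
    using assms by unfold_locales auto
  show False
    by (rule impossible)
qed

end
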